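(* Assume the setting described in the context, with vertex polynomials $p_1,\dots,p_{2^m}$. Then: (i) $\Psi^-$ is initially positive if and only if every $p_i$ is initially positive; (ii) $\Psi^+$ is initially positive if and only if at least one $p_i$ is initially positive; (iii) there exists $\kappa\ge0$ with $\Psi^-(\kappa)<0$ if and only if there exist $\kappa\ge 0$ and an index $i$ with $p_i(\kappa)<0$; (iv) there exists $\kappa\ge0$ with $\Psi^+(\kappa)<0$ if and only if there exists $\kappa\ge0$ with $p_i(\kappa)<0$ for all $i$.
   Context: Let $n,m\ge 1$, $B\in\mathbb{Z}^{n\times m}$, $C\in\mathbb{Z}^{m\times n}$, and $J_2,J_4\in\mathbb{R}^{n\times n}$ symmetric. Given bounds $0\le \Delta_j^-\le \Delta_j^+<\infty$ ($j=1,\dots,m$), $\mathcal{D}$ is the set of diagonal matrices $\Delta=\mathrm{diag}(\Delta_1,\dots,\Delta_m)$ with $\Delta_j^-\le\Delta_j\le\Delta_j^+$. For real $\kappa\ge0$, $\Psi^-(\kappa)=\min_{\Delta\in\mathcal{D}}\det[-(B\Delta C+\kappa^2J_2+\kappa^4J_4)]$ and $\Psi^+(\kappa)=\max_{\Delta\in\mathcal{D}}\det[-(B\Delta C+\kappa^2J_2+\kappa^4J_4)]$. Let $\Delta^{(1)},\dots,\Delta^{(2^m)}$ be the vertices of $\mathcal{D}$ (all $\Delta_j\in\{\Delta_j^-,\Delta_j^+\}$) and $p_i(\kappa)=\det[-(B\Delta^{(i)}C+\kappa^2J_2+\kappa^4J_4)]$. A function $f$ on $[0,\infty)$ is initially positive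 if there is $\hat\kappa>0$ with $f(\kappa)>0$ for all $\kappa\in(0,\hat\kappa)$. *)

theory Defs
  imports "HOL-Analysis.Analysis"
begin

definition diag_set :: "('m::finite \<Rightarrow> real) \<Rightarrow> ('m \<Rightarrow> real) \<Rightarrow> (real^'m^'m) set" where
  "diag_set lo hi = {\<Delta>. (\<forall>i j. i \<noteq> j \<longrightarrow> \<Delta> $ i $ j = 0) \<and> (\<forall>j. lo j \<le> \<Delta> $ j $ j \<and> \<Delta> $ j $ j \<le> hi j)}"

definition vertex_set :: "('m::finite \<Rightarrow> real) \<Rightarrow> ('m \<Rightarrow> real) \<Rightarrow> (real^'m^'m) set" where
  "vertex_set lo hi = {\<Delta> \<in> diag_set lo hi. \<forall>j. \<Delta> $ j $ j = lo j \<or> \<Delta> $ j $ j = hi j}"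

definition detfun :: "real^'m^'n \<Rightarrow> real^'n^'m \<Rightarrow> real^'n^'n \<Rightarrow> real^'n^'n
    \<Rightarrow> real^'m^'m \<Rightarrow> real \<Rightarrow> real" where
  "detfun B C J2 J4 \<Delta> \<kappa> = det (- (B ** \<Delta> ** C + (\<kappa>^2) *\<^sub>R J2 + (\<kappa>^4) *\<^sub>R J4))"

text \<open>Psi^- and Psi^+ (the min / max are attained since D is compact and det is continuous).\<close>
definition Psi_minus :: "real^'m^'n \<Rightarrow> real^'n^'m \<Rightarrow> real^'n^'n \<Rightarrow> real^'n^'n
    \<Rightarrow> ('m::finite \<Rightarrow> real) \<Rightarrow> ('m \<Rightarrow> real) \<Rightarrow> real \<Rightarrow> real" where
  "Psi_minus B C J2 J4 lo hi \<kappa> = Inf ((\<lambda>\<Delta>. detfun B C J2 J4 \<Delta> \<kappa>) ` diag_set lo hi)"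

definition Psi_plus :: "real^'m^'n \<Rightarrow> real^'n^'m \<Rightarrow> real^'n^'n \<Rightarrow> real^'n^'n
    \<Rightarrow> ('m::finite \<Rightarrow> real) \<Rightarrow> ('m \<Rightarrow> real) \<Rightarrow> real \<Rightarrow> real" where
  "Psi_plus B C J2 J4 lo hi \<kappa> = Sup ((\<lambda>\<Delta>. detfun B C J2 J4 \<Delta> \<kappa>) ` diag_set lo hi)"

definition initially_positive :: "(real \<Rightarrow> real) \<Rightarrow> bool" where
  "initially_positive f \<longleftrightarrow> (\<exists>k>0. \<forall>\<kappa>. 0 < \<kappa> \<and> \<kappa> < k \<longrightarrow> f \<kappa> > 0)"

end

theory Submission
  imports Defs "HOL-Computational_Algebra.Polynomial"
begin

text \<open>Changing one diagonal entry of \<open>\<Delta>\<close> perturbs \<open>B \<Delta> C\<close> by a rank-one matrix, and the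
  determinant is affine along rank-one perturbations. So for fixed \<open>\<kappa>\<close> the determinant is affine
  in each \<open>\<Delta>\<^sub>j\<close> separately; pushing the entries one at a time to the better endpoint shows that
  its minimum and maximum over the box \<open>\<D>\<close> are attained at vertices. Hence \<open>\<Psi>\<^sup>-\<close> and \<open>\<Psi>\<^sup>+\<close>
  are the pointwise minimum and maximum of the finitely many \<open>p\<^sub>i\<close>, which gives (i), (iii)
  and (iv) at once. For (ii) one also needs that each \<open>p\<^sub>i\<close>, being a polynomial in \<open>\<kappa>\<close>,
  has eventually constant sign as \<open>\<kappa> \<rightarrow> 0\<^sup>+\<close>.\<close>

lemma det_add_rank_one_rows:
  fixes r :: "'n::finite \<Rightarrow> 'a::comm_ring_1^'n" and u :: "'n \<Rightarrow> 'a" and v :: "'a^'n"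
  assumes "finite S"
  shows "det (\<chi> i. if i \<in> S then r i + (t * u i) *s v else r i) =
         det (\<chi> i. r i) + t * (\<Sum>k\<in>S. u k * det (\<chi> i. if i = k then v else r i))"
  using assms
proof (induction S arbitrary: r rule: finite_induct)
  case empty
  then show ?case by simp
next
  case (insert k S)
  define r' where "r' = r(k := r k + (t * u k) *s v)"
  have shift: "(\<chi> i. if i \<in> insert k S then r i + (t * u i) *s v else r i)
      = (\<chi> i. if i \<in> S then r' i + (t * u i) *s v else r' i)"
    using insert.hyps by (auto simp: r'_def intro!: vec_eq_iff[THEN iffD2])
  have row_k: "det (\<chi> i. r' i) = det (\<chi> i. r i) + t * (u k * det (\<chi> i. if i = k then v else r i))"
  proof -
    have "(\<chi> i. r' i) = (\<chi> i. if i = k then r i + (t * u k) *s v else r i)"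
      by (auto simp: r'_def intro!: vec_eq_iff[THEN iffD2])
    also have "det \<dots> = det (\<chi> i. if i = k then r i else r i)
        + det (\<chi> i. if i = k then (t * u k) *s v else r i)"
      by (rule det_row_add)
    also have "det (\<chi> i. if i = k then (t * u k) *s v else r i)
        = (t * u k) * det (\<chi> i. if i = k then v else r i)"
      by (rule det_row_mul)
    finally show ?thesis by simp
  qed
  have other_rows: "det (\<chi> i. if i = j then v else r' i) = det (\<chi> i. if i = j then v else r i)"
    if "j \<in> S" for j
  proof -
    \<comment> \<open>with row \<open>j\<close> equal to \<open>v\<close>, the change in row \<open>k\<close> is an elementary row operation\<close>
    have jk: "k \<noteq> j" using that insert.hyps by auto
    define A where "A = (\<chi> i. if i = j then v else r i)"
    have "det (\<chi> x. if x = k then row k A + (t * u k) *s row j A else row x A) = det A"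
      by (rule det_row_operation[OF jk])
    moreover have "(\<chi> x. if x = k then row k A + (t * u k) *s row j A else row x A)
        = (\<chi> i. if i = j then v else r' i)"
      using jk by (auto simp: A_def r'_def row_def intro!: vec_eq_iff[THEN iffD2])
    ultimately show ?thesis by (simp add: A_def)
  qed
  show ?case
    unfolding shift insert.IH row_k using insert.hyps other_rows
    by (simp add: algebra_simps)
qed

definition diag_update :: "'a^'m^'m \<Rightarrow> 'm::finite \<Rightarrow> 'a \<Rightarrow> 'a^'m^'m" where
  "diag_update D k t = (\<chi> i j. if i = k \<and> j = k then t else D $ i $ j)"

lemma diag_update_self: "diag_update D k (D $ k $ k) = D"
  by (auto simp: diag_update_def intro!: vec_eq_iff[THEN iffD2])

lemma matrix_mult_diag_update:
  fixes B :: "'a::comm_ring_1^'m::finite^'n::finite" and C :: "'a^'l::finite^'m"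
  shows "(B ** diag_update D k t ** C) $ i $ l
    = (B ** diag_update D k 0 ** C) $ i $ l + t * B $ i $ k * C $ k $ l"
proof -
  define E where "E = (\<chi> a b. if a = k then if b = k then t else 0 else 0)"
  have "diag_update D k t = diag_update D k 0 + E"
    by (auto simp: diag_update_def E_def intro!: vec_eq_iff[THEN iffD2])
  moreover have "(X + Y) ** C = X ** C + Y ** C" for X Y :: "'a^'m^'n"
    by (simp add: matrix_matrix_mult_def vec_eq_iff sum.distrib distrib_right)
  moreover have "(B ** E ** C) $ i $ l = t * B $ i $ k * C $ k $ l"
    by (simp add: E_def matrix_matrix_mult_def if_distrib[of "(*) _"] if_distrib[of "\<lambda>x. x * _"]
        cong: if_cong)
  ultimately show ?thesis
    by (simp add: matrix_add_ldistrib)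
qed

definition diag_affine :: "(real^'m^'m \<Rightarrow> real) \<Rightarrow> bool" where
  "diag_affine F \<longleftrightarrow> (\<forall>D k. \<exists>\<alpha> \<beta>. \<forall>t. F (diag_update D k t) = \<alpha> + t * \<beta>)"

lemma diag_affine_uminus: "diag_affine F \<Longrightarrow> diag_affine (\<lambda>D. - F D)"
  unfolding diag_affine_def by (metis minus_add_distrib mult_minus_right)

lemma diag_affine_detfun:
  fixes B :: "real^'m::finite^'n::finite" and C :: "real^'n^'m"
  shows "diag_affine (\<lambda>\<Delta>. detfun B C J2 J4 \<Delta> \<kappa>)"
  unfolding diag_affine_def
proof (intro allI)
  fix D k
  define X where "X = (\<kappa>^2) *\<^sub>R J2 + (\<kappa>^4) *\<^sub>R J4"
  define r where "r i = row i (- (B ** diag_update D k 0 ** C + X))" for i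
  define u where "u i = - B $ i $ k" for i
  have rows: "- (B ** diag_update D k t ** C + X) = (\<chi> i. r i + (t * u i) *s row k C)" for t
    by (simp add: vec_eq_iff r_def u_def row_def matrix_mult_diag_update[of B D k t C])
  have "detfun B C J2 J4 (diag_update D k t) \<kappa>
      = det (\<chi> i. r i) + t * (\<Sum>j\<in>UNIV. u j * det (\<chi> i. if i = j then row k C else r i))" for t
    using det_add_rank_one_rows[of UNIV r t u "row k C"]
    by (simp add: detfun_def X_def add.assoc flip: rows)
  then show "\<exists>\<alpha> \<beta>. \<forall>t. detfun B C J2 J4 (diag_update D k t) \<kappa> = \<alpha> + t * \<beta>"
    by blast
qed

lemma exists_vertex_le:
  assumes F: "diag_affine F" and lohi: "\<forall>j. lo j \<le> hi j" and "\<Delta> \<in> diag_set lo hi"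
  shows "\<exists>V\<in>vertex_set lo hi. F V \<le> F \<Delta>"
proof -
  have "\<forall>\<Delta>\<in>diag_set lo hi. (\<forall>j. j \<notin> S \<longrightarrow> \<Delta>$j$j = lo j \<or> \<Delta>$j$j = hi j)
      \<longrightarrow> (\<exists>V\<in>vertex_set lo hi. F V \<le> F \<Delta>)"
    if "finite S" for S
    using that
  proof (induction S rule: finite_induct)
    case empty
    then show ?case by (auto simp: vertex_set_def)
  next
    case (insert k S)
    show ?case
    proof (intro ballI impI)
      fix \<Delta>
      assume \<Delta>: "\<Delta> \<in> diag_set lo hi"
        and ends: "\<forall>j. j \<notin> insert k S \<longrightarrow> \<Delta>$j$j = lo j \<or> \<Delta>$j$j = hi j"
      obtain \<alpha> \<beta> where line: "\<And>t. F (diag_update \<Delta> k t) = \<alpha> + t * \<beta>"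
        using F unfolding diag_affine_def by blast
      define s where "s = (if \<beta> \<ge> 0 then lo k else hi k)"
      have "lo k \<le> \<Delta>$k$k" "\<Delta>$k$k \<le> hi k"
        using \<Delta> by (auto simp: diag_set_def)
      then have "\<alpha> + s * \<beta> \<le> \<alpha> + \<Delta>$k$k * \<beta>"
        by (auto simp: s_def intro: mult_right_mono mult_right_mono_neg)
      then have "F (diag_update \<Delta> k s) \<le> F \<Delta>"
        using line[of s] line[of "\<Delta>$k$k"] by (simp add: diag_update_self)
      moreover have "diag_update \<Delta> k s \<in> diag_set lo hi"
        using \<Delta> lohi by (auto simp: diag_set_def diag_update_def s_def)
      moreover have "\<forall>j. j \<notin> S \<longrightarrow> diag_update \<Delta> k s $j$j = lo j \<or> diag_update \<Delta> k s $j$j = hi j"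
        using ends by (auto simp: diag_update_def s_def)
      ultimately show "\<exists>V\<in>vertex_set lo hi. F V \<le> F \<Delta>"
        using insert.IH by (meson order_trans)
    qed
  qed
  from this[OF finite, of UNIV] assms(3) show ?thesis by blast
qed

lemma finite_vertex_set [simp]: "finite (vertex_set lo hi)"
proof (rule finite_subset)
  show "vertex_set lo hi \<subseteq> range (\<lambda>s. \<chi> a b. if a = b then if s a then hi a else lo a else 0)"
  proof
    fix D assume "D \<in> vertex_set lo hi"
    then have "D = (\<chi> a b. if a = b then if D$a$a = hi a then hi a else lo a else 0)"
      by (auto simp: vertex_set_def diag_set_def intro!: vec_eq_iff[THEN iffD2])
    then show "D \<in> range (\<lambda>s. \<chi> a b. if a = b then if s a then hi a else lo a else 0)"
      by (rule image_eqI[where x="\<lambda>a. D$a$a = hi a"]) simp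
  qed
qed (rule finite_imageI, simp)

lemma vertex_set_nonempty:
  assumes "\<forall>j. lo j \<le> hi j"
  shows "vertex_set lo hi \<noteq> {}"
proof -
  have "(\<chi> a b. if a = b then lo a else 0) \<in> vertex_set lo hi"
    using assms by (auto simp: vertex_set_def diag_set_def)
  then show ?thesis by blast
qed

lemma Inf_diag_set_eq_Min_vertices:
  assumes "diag_affine F" and "\<forall>j. lo j \<le> hi j"
  shows "Inf (F ` diag_set lo hi) = Min (F ` vertex_set lo hi)"
proof (rule cInf_eq_minimum)
  have "Min (F ` vertex_set lo hi) \<in> F ` vertex_set lo hi"
    by (rule Min_in) (simp_all add: vertex_set_nonempty assms(2))
  then show "Min (F ` vertex_set lo hi) \<in> F ` diag_set lo hi"
    by (auto simp: vertex_set_def)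
next
  fix x assume "x \<in> F ` diag_set lo hi"
  then obtain \<Delta> where "\<Delta> \<in> diag_set lo hi" "x = F \<Delta>" by blast
  then obtain V where V: "V \<in> vertex_set lo hi" "F V \<le> x"
    using exists_vertex_le[OF assms] by blast
  have "Min (F ` vertex_set lo hi) \<le> F V"
    by (rule Min_le) (simp_all add: V(1))
  with V(2) show "Min (F ` vertex_set lo hi) \<le> x" by linarith
qed

lemma Sup_diag_set_eq_Max_vertices:
  assumes "diag_affine F" and "\<forall>j. lo j \<le> hi j"
  shows "Sup (F ` diag_set lo hi) = Max (F ` vertex_set lo hi)"
proof (rule cSup_eq_maximum)
  have "Max (F ` vertex_set lo hi) \<in> F ` vertex_set lo hi"
    by (rule Max_in) (simp_all add: vertex_set_nonempty assms(2))
  then show "Max (F ` vertex_set lo hi) \<in> F ` diag_set lo hi"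
    by (auto simp: vertex_set_def)
next
  fix x assume "x \<in> F ` diag_set lo hi"
  then obtain \<Delta> where "\<Delta> \<in> diag_set lo hi" "x = F \<Delta>" by blast
  then obtain V where V: "V \<in> vertex_set lo hi" "- F V \<le> - x"
    using exists_vertex_le[OF diag_affine_uminus[OF assms(1)] assms(2)] by blast
  have "F V \<le> Max (F ` vertex_set lo hi)"
    by (rule Max_ge) (simp_all add: V(1))
  with V(2) show "x \<le> Max (F ` vertex_set lo hi)" by linarith
qed

lemma detfun_eq_poly:
  fixes B :: "real^'m::finite^'n::finite" and C :: "real^'n^'m"
  shows "\<exists>p. detfun B C J2 J4 \<Delta> = poly p"
proof -
  define M where "M = B ** \<Delta> ** C"
  define P where "P = det (\<chi> i j. [:- M $ i $ j, 0, - J2 $ i $ j, 0, - J4 $ i $ j:])"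
  have "detfun B C J2 J4 \<Delta> \<kappa> = poly P \<kappa>" for \<kappa>
    by (simp add: P_def M_def detfun_def det_def poly_sum poly_prod algebra_simps power_numeral_reduce)
  then show ?thesis by blast
qed

lemma poly_eventually_pos_or_nonpos_at_right:
  fixes p :: "real poly"
  shows "eventually (\<lambda>x. poly p x > 0) (at_right a) \<or> eventually (\<lambda>x. poly p x \<le> 0) (at_right a)"
proof (cases "p = 0")
  case True
  then show ?thesis by simp
next
  case False
  define n where "n = order a p"
  obtain q where p: "p = [:- a, 1:] ^ n * q" and "\<not> [:- a, 1:] dvd q"
    using order_decomp[OF False] unfolding n_def by blast
  have p_eq: "poly p x = (x - a) ^ n * poly q x" for x
    by (simp add: p poly_power)
  have "poly q a \<noteq> 0"
    using \<open>\<not> [:- a, 1:] dvd q\<close> by (simp add: poly_eq_0_iff_dvd)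
  moreover have q_lim: "(poly q \<longlongrightarrow> poly q a) (at_right a)"
    by (intro tendsto_intros)
  moreover have right: "eventually (\<lambda>x. x > a) (at_right a)"
    by (rule eventually_at_right_less)
  ultimately consider "poly q a > 0" | "poly q a < 0"
    by linarith
  then show ?thesis
  proof cases
    case 1
    have "eventually (\<lambda>x. poly p x > 0) (at_right a)"
      using order_tendstoD(1)[OF q_lim 1] right
      by eventually_elim (simp add: p_eq)
    then show ?thesis ..
  next
    case 2
    have "eventually (\<lambda>x. poly p x \<le> 0) (at_right a)"
      using order_tendstoD(2)[OF q_lim 2] right
      by eventually_elim (simp add: p_eq mult_nonneg_nonpos)
    then show ?thesis ..
  qed
qed

lemma initially_positive_iff_eventually:
  "initially_positive f \<longleftrightarrow> eventually (\<lambda>x. f x > 0) (at_right 0)"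
  by (auto simp: initially_positive_def eventually_at_right_field)

lemma initially_positive_Min:
  assumes "finite V" and "V \<noteq> {}"
  shows "initially_positive (\<lambda>x. Min ((\<lambda>v. f v x) ` V)) \<longleftrightarrow> (\<forall>v\<in>V. initially_positive (f v))"
  using assms by (simp add: initially_positive_iff_eventually eventually_ball_finite_distrib)

lemma initially_positive_Max:
  assumes "finite V" and "V \<noteq> {}"
    and sign: "\<forall>v\<in>V. initially_positive (f v) \<or> eventually (\<lambda>x. f v x \<le> 0) (at_right 0)"
  shows "initially_positive (\<lambda>x. Max ((\<lambda>v. f v x) ` V)) \<longleftrightarrow> (\<exists>v\<in>V. initially_positive (f v))"
proof
  assume "initially_positive (\<lambda>x. Max ((\<lambda>v. f v x) ` V))"
  then have some_pos: "eventually (\<lambda>x. \<exists>v\<in>V. f v x > 0) (at_right 0)"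
    using assms(1,2) by (simp add: initially_positive_iff_eventually Max_gr_iff)
  show "\<exists>v\<in>V. initially_positive (f v)"
  proof (rule ccontr)
    assume "\<not> (\<exists>v\<in>V. initially_positive (f v))"
    then have "eventually (\<lambda>x. \<forall>v\<in>V. f v x \<le> 0) (at_right 0)"
      using sign assms(1) by (simp add: eventually_ball_finite_distrib)
    with some_pos have "eventually (\<lambda>x. False) (at_right (0::real))"
      by eventually_elim force
    then show False by simp
  qed
next
  assume "\<exists>v\<in>V. initially_positive (f v)"
  then show "initially_positive (\<lambda>x. Max ((\<lambda>v. f v x) ` V))"
    using assms(1,2)
    by (auto simp: initially_positive_iff_eventually Max_gr_iff elim!: eventually_mono)
qed

theorem proposition2:
  fixes B :: "real^'m::finite^'n::finite" and C :: "real^'n^'m"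
    and J2 J4 :: "real^'n^'n" and lo hi :: "'m \<Rightarrow> real"
  assumes "\<forall>i j. B $ i $ j \<in> \<int>" and "\<forall>i j. C $ i $ j \<in> \<int>"
    and "transpose J2 = J2" and "transpose J4 = J4"
    and "\<forall>j. 0 \<le> lo j \<and> lo j \<le> hi j"
  shows "(initially_positive (Psi_minus B C J2 J4 lo hi) \<longleftrightarrow>
            (\<forall>\<Delta>\<in>vertex_set lo hi. initially_positive (detfun B C J2 J4 \<Delta>)))
       \<and> (initially_positive (Psi_plus B C J2 J4 lo hi) \<longleftrightarrow>
            (\<exists>\<Delta>\<in>vertex_set lo hi. initially_positive (detfun B C J2 J4 \<Delta>)))
       \<and> ((\<exists>\<kappa>\<ge>0. Psi_minus B C J2 J4 lo hi \<kappa> < 0) \<longleftrightarrow>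
            (\<exists>\<kappa>\<ge>0. \<exists>\<Delta>\<in>vertex_set lo hi. detfun B C J2 J4 \<Delta> \<kappa> < 0))
       \<and> ((\<exists>\<kappa>\<ge>0. Psi_plus B C J2 J4 lo hi \<kappa> < 0) \<longleftrightarrow>
            (\<exists>\<kappa>\<ge>0. \<forall>\<Delta>\<in>vertex_set lo hi. detfun B C J2 J4 \<Delta> \<kappa> < 0))"
proof -
  have lohi: "\<forall>j. lo j \<le> hi j" using assms(5) by blast
  let ?V = "vertex_set lo hi" and ?p = "detfun B C J2 J4"
  have fin: "finite ?V" and ne: "?V \<noteq> {}"
    using vertex_set_nonempty[OF lohi] by simp_all
  have Psi_minus: "Psi_minus B C J2 J4 lo hi = (\<lambda>\<kappa>. Min ((\<lambda>\<Delta>. ?p \<Delta> \<kappa>) ` ?V))"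
    by (simp add: fun_eq_iff Psi_minus_def Inf_diag_set_eq_Min_vertices diag_affine_detfun lohi)
  have Psi_plus: "Psi_plus B C J2 J4 lo hi = (\<lambda>\<kappa>. Max ((\<lambda>\<Delta>. ?p \<Delta> \<kappa>) ` ?V))"
    by (simp add: fun_eq_iff Psi_plus_def Sup_diag_set_eq_Max_vertices diag_affine_detfun lohi)
  have sign: "\<forall>\<Delta>\<in>?V. initially_positive (?p \<Delta>) \<or> eventually (\<lambda>\<kappa>. ?p \<Delta> \<kappa> \<le> 0) (at_right 0)"
  proof
    fix \<Delta>
    obtain P where "?p \<Delta> = poly P" using detfun_eq_poly by blast
    then show "initially_positive (?p \<Delta>) \<or> eventually (\<lambda>\<kappa>. ?p \<Delta> \<kappa> \<le> 0) (at_right 0)"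
      using poly_eventually_pos_or_nonpos_at_right[of P 0]
      by (simp add: initially_positive_iff_eventually)
  qed
  show ?thesis
    unfolding Psi_minus Psi_plus
    using initially_positive_Min[OF fin ne] initially_positive_Max[OF fin ne sign]
    by (simp add: Min_less_iff Max_less_iff fin ne)
qed

end
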